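(* Let $\mathscr{D}$ be a nonnegative integer-valued random variable with $\mathbb{P}(\mathscr{D}>t)=\mathcal{L}(t)t^{-\gamma}$, $\mathcal{L}$ slowly varying, $1<\gamma<2$. Let $D_1,\dots,D_n$ be i.i.d. copies, $G_n$ the configuration model with these degrees and $Z_n$ the number of edges removed when forming the erased configuration model from $G_n$. Then for every $\delta>0$, $Z_n/n^{2-\gamma+\delta}\to0$ in probability.
   Context: Configuration model: vertex $i$ gets $D_i$ half-edges (one added if the sum is odd; ignored), paired uniformly at random; $X_{ij}$ is the number of edges between $i\ne j$ and $X_{ii}$ the number of self-loops at $i$. The erased configuration model removes self-loops and merges multiple edges; the number of removed edges is $Z_n=\sum_{i=1}^nX_{ii}+\sum_{1\le i<j\le n}(X_{ij}-\mathbf 1\{X_{ij}>0\})$. *)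

theory Defs
  imports "HOL-Probability.Probability"
begin

definition slowly_varying :: "(real \<Rightarrow> real) \<Rightarrow> bool" where
  "slowly_varying L \<longleftrightarrow> (\<forall>x>0. L x > 0) \<and>
     (\<forall>a>0. ((\<lambda>x. L (a * x) / L x) \<longlongrightarrow> 1) at_top)"

definition cm_degrees :: "nat \<Rightarrow> (nat \<Rightarrow> nat) \<Rightarrow> nat \<Rightarrow> nat" where
  "cm_degrees n d = (if odd (\<Sum>i<n. d i) then d(n - 1 := d (n - 1) + 1) else d)"

definition half_edges :: "nat \<Rightarrow> (nat \<Rightarrow> nat) \<Rightarrow> (nat \<times> nat) set" where
  "half_edges n d = {(i, k). i < n \<and> k < d i}"

text \<open>Perfect matchings of a set H, as fixed-point-free involutions on H
  (identity outside H).\<close>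
definition pairings :: "'a set \<Rightarrow> ('a \<Rightarrow> 'a) set" where
  "pairings H = {f. (\<forall>x\<in>H. f x \<in> H \<and> f x \<noteq> x \<and> f (f x) = x) \<and> (\<forall>x. x \<notin> H \<longrightarrow> f x = x)}"

text \<open>Number of edges between distinct vertices i and j, and number of self-loops at i.\<close>
definition cm_X :: "(nat \<times> nat) set \<Rightarrow> ((nat \<times> nat) \<Rightarrow> (nat \<times> nat)) \<Rightarrow> nat \<Rightarrow> nat \<Rightarrow> nat" where
  "cm_X H f i j = (if i = j then card {h\<in>H. fst h = i \<and> fst (f h) = i} div 2
                   else card {h\<in>H. fst h = i \<and> fst (f h) = j})"

text \<open>Number of edges removed when erasing self-loops and multiple edges.\<close>
definition cm_Z :: "nat \<Rightarrow> (nat \<times> nat) set \<Rightarrow> ((nat \<times> nat) \<Rightarrow> (nat \<times> nat)) \<Rightarrow> nat" where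
  "cm_Z n H f = (\<Sum>i<n. cm_X H f i i) +
     (\<Sum>(i, j)\<in>{(i, j). i < j \<and> j < n}. cm_X H f i j - (if cm_X H f i j > 0 then 1 else 0))"

definition Z_distr :: "nat pmf \<Rightarrow> nat \<Rightarrow> nat pmf" where
  "Z_distr p n =
     Pi_pmf {..<n} 0 (\<lambda>_. p) \<bind>
       (\<lambda>D. let H = half_edges n (cm_degrees n D) in
             map_pmf (cm_Z n H) (pmf_of_set (pairings H)))"

end

(*
  Condition on the degrees and let M be the number of half-edges.  In a uniform pairing a given
  half-edge is matched to a prescribed one with probability 1/(M-1), and two prescribed disjoint
  matchings occur with probability 1/((M-1)(M-3)); both facts follow from symmetry under
  conjugation by transpositions.  Hence the expected number of self-loops at i is at most
  min(d_i, d_i^2/(M-1)), and since X - 1{X>0} <= min(X, X(X-1)), the expected number of surplus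
  edges between i and j is at most min(d_i d_j/(M-1), (d_i d_j)^2/((M-1)(M-3))).  Interpolating
  each minimum with an exponent 1 <= s < gamma bounds E[Z_n | D] by sums of (D_i+1)^s m^(1-s) and
  ((D_i+1)(D_j+1))^s m^(-s) whenever m <= M-1.  A regularly varying tail of index gamma > s gives
  E (D+1)^s < oo, and the total degree exceeds c n except with probability e^(-c n).  Taking m of
  order n, Markov's inequality yields P(Z_n > t) <= e^(-c n) + K n^(2-s) / t, and 2 - s can be
  chosen below 2 - gamma + delta.
*)

theory Submission
  imports Defs "HOL-Combinatorics.Transposition"
begin

lemma card_eq_by_involution:
  assumes "\<And>x. \<phi> (\<phi> x) = x" "\<phi> ` A \<subseteq> B" "\<phi> ` B \<subseteq> A" "finite A" "finite B"
  shows "card A = card B"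
proof -
  have inj: "inj_on \<phi> X" for X by (metis assms(1) inj_onI)
  show ?thesis
    using card_inj_on_le[OF inj assms(2,5)] card_inj_on_le[OF inj assms(3,4)] by simp
qed

lemma card_eq_sum_card_fibres:
  assumes "finite A" "finite B" "\<And>x. x \<in> A \<Longrightarrow> g x \<in> B"
  shows "card A = (\<Sum>b\<in>B. card {x\<in>A. g x = b})"
proof -
  have "card A = card (\<Union>b\<in>B. {x\<in>A. g x = b})"
    using assms(3) by (intro arg_cong[where f = card]) auto
  also have "\<dots> = (\<Sum>b\<in>B. card {x\<in>A. g x = b})"
    using assms by (intro card_UN_disjoint) auto
  finally show ?thesis .
qed

lemma sum_card_filter_swap:
  assumes "finite P" "finite X"
  shows "(\<Sum>f\<in>P. card {x\<in>X. Q f x}) = (\<Sum>x\<in>X. card {f\<in>P. Q f x})"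
proof -
  have card_eq: "card {y\<in>Y. R y} = (\<Sum>y\<in>Y. of_bool (R y))" if "finite Y" for Y R
    using that by (simp add: Int_def)
  have "(\<Sum>f\<in>P. card {x\<in>X. Q f x}) = (\<Sum>f\<in>P. \<Sum>x\<in>X. of_bool (Q f x))"
    using assms by (simp add: card_eq del: sum_of_bool_eq)
  also have "\<dots> = (\<Sum>x\<in>X. \<Sum>f\<in>P. of_bool (Q f x))"
    by (rule sum.swap)
  also have "\<dots> = (\<Sum>x\<in>X. card {f\<in>P. Q f x})"
    using assms by (simp add: card_eq del: sum_of_bool_eq)
  finally show ?thesis .
qed

lemma card_filter_eq_card_graph:
  "card {x\<in>X. \<phi> x \<in> Y} = card {z\<in>X \<times> Y. \<phi> (fst z) = snd z}"
proof -
  have "{z\<in>X \<times> Y. \<phi> (fst z) = snd z} = (\<lambda>x. (x, \<phi> x)) ` {x\<in>X. \<phi> x \<in> Y}" by auto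
  then show ?thesis by (simp add: card_image inj_on_def)
qed

lemma card_offdiag:
  assumes "finite A"
  shows "card {x\<in>A \<times> A. fst x \<noteq> snd x} = card A * (card A - 1)"
proof -
  have "{x\<in>A \<times> A. fst x \<noteq> snd x} = A \<times> A - (\<lambda>x. (x, x)) ` A" by auto
  moreover have "card ((\<lambda>x. (x, x)) ` A) = card A" by (simp add: card_image inj_on_def)
  ultimately show ?thesis
    using assms by (simp add: card_Diff_subset card_cartesian_product diff_mult_distrib2 image_subset_iff)
qed

lemma pairingsD:
  assumes "f \<in> pairings H"
  shows pairings_closed: "x \<in> H \<Longrightarrow> f x \<in> H"
    and pairings_no_fixpoint: "x \<in> H \<Longrightarrow> f x \<noteq> x"
    and pairings_involution: "f (f x) = x"
  using assms by (auto simp: pairings_def)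

lemma finite_pairings:
  assumes "finite H"
  shows "finite (pairings H)"
proof -
  have "inj_on (\<lambda>f. restrict f H) (pairings H)"
    by (rule inj_onI) (auto simp: pairings_def fun_eq_iff restrict_def split: if_splits, metis)
  moreover have "(\<lambda>f. restrict f H) ` pairings H \<subseteq> PiE H (\<lambda>_. H)"
    by (auto simp: pairings_def)
  ultimately show ?thesis
    using assms by (meson finite_PiE finite_imageD finite_subset)
qed

lemma pairings_nonempty:
  "finite H \<Longrightarrow> even (card H) \<Longrightarrow> pairings H \<noteq> {}"
proof (induction "card H" arbitrary: H rule: less_induct)
  case less
  show ?case
  proof (cases "H = {}")
    case True
    then have "id \<in> pairings H" by (auto simp: pairings_def)
    then show ?thesis by blast
  next
    case False
    then obtain a where a: "a \<in> H" by blast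
    moreover have "H \<noteq> {a}" using less.prems by auto
    ultimately obtain b where b: "b \<in> H" "b \<noteq> a" by blast
    have "card (H - {a, b}) = card H - 2"
      using a b less.prems(1) by (simp add: card_Diff_subset)
    moreover have "card H \<ge> 2"
      using a b less.prems(1) by (metis card_2_iff card_mono empty_subsetI insert_subset)
    ultimately obtain g where "g \<in> pairings (H - {a, b})"
      using less.hyps[of "H - {a, b}"] less.prems by fastforce
    then have "g(a := b, b := a) \<in> pairings H"
      using a b unfolding pairings_def by auto
    then show ?thesis by blast
  qed
qed

lemma transpose_conj_in_pairings:
  assumes "u \<in> H" "v \<in> H" "f \<in> pairings H"
  shows "Transposition.transpose u v \<circ> f \<circ> Transposition.transpose u v \<in> pairings H"
proof -
  have mem: "Transposition.transpose u v x \<in> H \<longleftrightarrow> x \<in> H" for x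
    using assms by (auto simp: Transposition.transpose_def)
  show ?thesis
    using assms unfolding pairings_def by (auto simp: mem transpose_eq_iff)
qed

lemma card_pairings_eq_partner:
  assumes "finite H" "a \<in> H" "b \<in> H" "a \<noteq> b"
  shows "card (pairings H) = (card H - 1) * card {f\<in>pairings H. f a = b}"
proof -
  let ?P = "pairings H"
  have fin: "finite ?P" using assms(1) by (rule finite_pairings)
  have "card ?P = (\<Sum>b'\<in>H - {a}. card {f\<in>?P. f a = b'})"
    using fin assms by (intro card_eq_sum_card_fibres) (auto dest: pairingsD)
  also have "\<dots> = (\<Sum>b'\<in>H - {a}. card {f\<in>?P. f a = b})"
  proof (intro sum.cong refl)
    fix b' assume b': "b' \<in> H - {a}"
    define \<tau> where "\<tau> = Transposition.transpose b b'"
    have conj: "(\<tau> \<circ> f \<circ> \<tau>) a = \<tau> (f a)" for f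
      using assms b' by (auto simp: \<tau>_def Transposition.transpose_def)
    show "card {f\<in>?P. f a = b'} = card {f\<in>?P. f a = b}"
    proof (rule card_eq_by_involution[where \<phi> = "\<lambda>f. \<tau> \<circ> f \<circ> \<tau>"])
      show "\<tau> \<circ> (\<tau> \<circ> f \<circ> \<tau>) \<circ> \<tau> = f" for f
        by (simp add: fun_eq_iff \<tau>_def)
      show "(\<lambda>f. \<tau> \<circ> f \<circ> \<tau>) ` {f\<in>?P. f a = b'} \<subseteq> {f\<in>?P. f a = b}"
        "(\<lambda>f. \<tau> \<circ> f \<circ> \<tau>) ` {f\<in>?P. f a = b} \<subseteq> {f\<in>?P. f a = b'}"
        using assms b' by (auto simp: conj \<tau>_def intro: transpose_conj_in_pairings)
    qed (use fin in auto)
  qed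
  also have "\<dots> = (card H - 1) * card {f\<in>?P. f a = b}"
    using assms by simp
  finally show ?thesis .
qed

lemma card_pairings_partner_eq_two_partners:
  assumes "finite H" "a \<in> H" "b \<in> H" "c \<in> H" "e \<in> H" "distinct [a, b, c, e]"
  shows "card {f\<in>pairings H. f a = b} = (card H - 3) * card {f\<in>pairings H. f a = b \<and> f c = e}"
proof -
  let ?Q = "{f\<in>pairings H. f a = b}"
  have fin: "finite ?Q" using finite_pairings[OF assms(1)] by simp
  have "card ?Q = (\<Sum>e'\<in>H - {a, b, c}. card {f\<in>?Q. f c = e'})"
  proof (intro card_eq_sum_card_fibres fin)
    fix f assume f: "f \<in> ?Q"
    then have inv: "f (f x) = x" for x by (auto intro: pairings_involution)
    have "f c \<noteq> a" "f c \<noteq> b"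
      using inv[of a] inv[of c] f assms(6) by auto
    then show "f c \<in> H - {a, b, c}"
      using f assms(4) pairingsD[of f H] by auto
  qed (use assms in auto)
  also have "\<dots> = (\<Sum>e'\<in>H - {a, b, c}. card {f\<in>?Q. f c = e})"
  proof (intro sum.cong refl)
    fix e' assume e': "e' \<in> H - {a, b, c}"
    define \<tau> where "\<tau> = Transposition.transpose e e'"
    have conj: "(\<tau> \<circ> f \<circ> \<tau>) x = \<tau> (f x)" "\<tau> b = b" if "x \<in> {a, c}" for f x
      using assms e' that by (auto simp: \<tau>_def Transposition.transpose_def)
    show "card {f\<in>?Q. f c = e'} = card {f\<in>?Q. f c = e}"
    proof (rule card_eq_by_involution[where \<phi> = "\<lambda>f. \<tau> \<circ> f \<circ> \<tau>"])
      show "\<tau> \<circ> (\<tau> \<circ> f \<circ> \<tau>) \<circ> \<tau> = f" for f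
        by (simp add: fun_eq_iff \<tau>_def)
      show "(\<lambda>f. \<tau> \<circ> f \<circ> \<tau>) ` {f\<in>?Q. f c = e'} \<subseteq> {f\<in>?Q. f c = e}"
        "(\<lambda>f. \<tau> \<circ> f \<circ> \<tau>) ` {f\<in>?Q. f c = e} \<subseteq> {f\<in>?Q. f c = e'}"
        using assms e' by (auto simp: conj \<tau>_def intro: transpose_conj_in_pairings)
    qed (use finite_pairings[OF assms(1)] in auto)
  qed
  also have "\<dots> = (card H - 3) * card {f\<in>?Q. f c = e}"
    using assms by (simp add: card_Diff_subset numeral_3_eq_3)
  finally show ?thesis by (simp add: conj_assoc)
qed

lemma card_pairings_partner_le:
  assumes "finite H" "2 \<le> card H" "a \<in> H" "b \<in> H"
  shows "real (card {f\<in>pairings H. f a = b}) \<le> real (card (pairings H)) / (real (card H) - 1)"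
proof (cases "a = b")
  case True
  then have empty: "{f\<in>pairings H. f a = b} = {}" using assms(3) pairings_no_fixpoint by fastforce
  show ?thesis unfolding empty using assms(2) by (auto intro!: divide_nonneg_nonneg mult_nonneg_nonneg)
next
  case False
  then have eq: "real (card (pairings H)) = (real (card H) - 1) * real (card {f\<in>pairings H. f a = b})"
    using card_pairings_eq_partner[OF assms(1,3,4)] assms(2) by (simp add: of_nat_diff)
  have pos: "real (card H) - 1 > 0" using assms(2) by simp
  show ?thesis unfolding pos_le_divide_eq[OF pos] eq by (simp add: mult.commute)
qed

lemma card_pairings_two_partners_le:
  assumes "finite H" "4 \<le> card H" "a \<in> H" "b \<in> H" "c \<in> H" "e \<in> H" "a \<noteq> c"
    and "{a, c} \<inter> {b, e} = {}"
  shows "real (card {f\<in>pairings H. f a = b \<and> f c = e})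
    \<le> real (card (pairings H)) / ((real (card H) - 1) * (real (card H) - 3))"
proof (cases "b = e")
  case True
  have empty: "{f\<in>pairings H. f a = b \<and> f c = e} = {}"
  proof (intro equals0I)
    fix f assume "f \<in> {f\<in>pairings H. f a = b \<and> f c = e}"
    then have "f (f a) = a" "f (f c) = c" "f a = b" "f c = e"
      using pairings_involution by auto
    then show False using True assms(7) by simp
  qed
  show ?thesis unfolding empty using assms(2) by (auto intro!: divide_nonneg_nonneg mult_nonneg_nonneg)
next
  case False
  have "card (pairings H) = (card H - 1) * ((card H - 3) * card {f\<in>pairings H. f a = b \<and> f c = e})"
    using assms False card_pairings_eq_partner[of H a b] card_pairings_partner_eq_two_partners[of H a b c e]
    by auto
  then have eq: "real (card (pairings H)) =
      ((real (card H) - 1) * (real (card H) - 3)) * real (card {f\<in>pairings H. f a = b \<and> f c = e})"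
    using assms(2) by (simp add: of_nat_diff)
  have pos: "(real (card H) - 1) * (real (card H) - 3) > 0" using assms(2) by simp
  show ?thesis unfolding pos_le_divide_eq[OF pos] eq by (simp add: mult.commute)
qed

lemma sum_card_matched_le:
  assumes "finite H" "2 \<le> card H" "A \<subseteq> H" "B \<subseteq> H"
  shows "(\<Sum>f\<in>pairings H. real (card {h\<in>A. f h \<in> B}))
    \<le> real (card (pairings H)) * (real (card A) * real (card B) / (real (card H) - 1))"
proof -
  have fin: "finite A" "finite B" "finite (pairings H)"
    using assms(1,3,4) by (auto intro: finite_subset finite_pairings)
  have "(\<Sum>f\<in>pairings H. card {h\<in>A. f h \<in> B}) =
      (\<Sum>x\<in>A \<times> B. card {f\<in>pairings H. f (fst x) = snd x})"
    unfolding card_filter_eq_card_graph using fin by (intro sum_card_filter_swap) auto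
  then have "(\<Sum>f\<in>pairings H. real (card {h\<in>A. f h \<in> B})) =
      (\<Sum>x\<in>A \<times> B. real (card {f\<in>pairings H. f (fst x) = snd x}))"
    unfolding of_nat_sum[symmetric] by (rule arg_cong)
  also have "\<dots> \<le> real (card (A \<times> B)) * (real (card (pairings H)) / (real (card H) - 1))"
    using assms by (intro sum_bounded_above card_pairings_partner_le) auto
  finally show ?thesis by (simp add: card_cartesian_product mult_ac)
qed

lemma sum_card_matched_pairs_le:
  assumes "finite H" "4 \<le> card H" "A \<subseteq> H" "B \<subseteq> H" "A \<inter> B = {}"
  shows "(\<Sum>f\<in>pairings H. real (card {h\<in>A. f h \<in> B} * (card {h\<in>A. f h \<in> B} - 1)))
    \<le> real (card (pairings H)) *
      (real (card A)^2 * real (card B)^2 / ((real (card H) - 1) * (real (card H) - 3)))"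
proof -
  define Od where "Od = {x\<in>A \<times> A. fst x \<noteq> snd x}"
  define \<phi> where "\<phi> f x = (f (fst x), f (snd x))" for f :: "'a \<Rightarrow> 'a" and x :: "'a \<times> 'a"
  define c where "c = real (card (pairings H)) / ((real (card H) - 1) * (real (card H) - 3))"
  have fin: "finite A" "finite B" "finite (pairings H)"
    using assms(1,3,4) by (auto intro: finite_subset finite_pairings)
  have finOd: "finite Od"
    unfolding Od_def using fin(1) by (auto intro: finite_subset[of _ "A \<times> A"])
  have pairs: "card {h\<in>A. f h \<in> B} * (card {h\<in>A. f h \<in> B} - 1) = card {x\<in>Od. \<phi> f x \<in> B \<times> B}" for f
  proof -
    have "{x\<in>Od. \<phi> f x \<in> B \<times> B} = {x\<in>{h\<in>A. f h \<in> B} \<times> {h\<in>A. f h \<in> B}. fst x \<noteq> snd x}"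
      by (auto simp: Od_def \<phi>_def)
    moreover have "finite {h\<in>A. f h \<in> B}" using fin(1) by simp
    ultimately show ?thesis by (simp only: card_offdiag)
  qed
  have "(\<Sum>f\<in>pairings H. card {h\<in>A. f h \<in> B} * (card {h\<in>A. f h \<in> B} - 1)) =
      (\<Sum>z\<in>Od \<times> (B \<times> B). card {f\<in>pairings H. \<phi> f (fst z) = snd z})"
    unfolding pairs unfolding card_filter_eq_card_graph using fin finOd by (intro sum_card_filter_swap) auto
  then have "(\<Sum>f\<in>pairings H. real (card {h\<in>A. f h \<in> B} * (card {h\<in>A. f h \<in> B} - 1))) =
      (\<Sum>z\<in>Od \<times> (B \<times> B). real (card {f\<in>pairings H. \<phi> f (fst z) = snd z}))"
    unfolding of_nat_sum[symmetric] by (rule arg_cong)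
  also have "\<dots> \<le> real (card (Od \<times> (B \<times> B))) * c"
  proof (intro sum_bounded_above)
    fix z assume z: "z \<in> Od \<times> (B \<times> B)"
    obtain h h' g g' where hg: "z = ((h, h'), (g, g'))" by (metis prod.collapse)
    have "h \<in> A" "h' \<in> A" "h \<noteq> h'" "g \<in> B" "g' \<in> B" using z by (auto simp: hg Od_def)
    then show "real (card {f\<in>pairings H. \<phi> f (fst z) = snd z}) \<le> c"
      unfolding hg c_def \<phi>_def fst_conv snd_conv prod.inject
      using assms by (intro card_pairings_two_partners_le) auto
  qed
  also have "\<dots> \<le> real (card A)^2 * real (card B)^2 * c"
  proof (intro mult_right_mono)
    have "card Od \<le> card (A \<times> A)" unfolding Od_def using fin(1) by (intro card_mono) auto
    then have "real (card Od) \<le> real (card A) * real (card A)"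
      by (simp add: card_cartesian_product flip: of_nat_mult)
    then show "real (card (Od \<times> (B \<times> B))) \<le> real (card A)^2 * real (card B)^2"
      by (simp add: card_cartesian_product power2_eq_square mult_right_mono)
    show "0 \<le> c" unfolding c_def using assms(2) by (auto intro!: divide_nonneg_nonneg mult_nonneg_nonneg)
  qed
  finally show ?thesis by (simp add: c_def mult_ac)
qed

definition half_edges_at :: "(nat \<times> nat) set \<Rightarrow> nat \<Rightarrow> (nat \<times> nat) set" where
  "half_edges_at H i = {h\<in>H. fst h = i}"

lemma half_edges_at_subset: "half_edges_at H i \<subseteq> H"
  by (auto simp: half_edges_at_def)

lemma half_edges_Sigma: "half_edges n d = (SIGMA i:{..<n}. {..<d i})"
  by (auto simp: half_edges_def)

lemma finite_half_edges: "finite (half_edges n d)"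
  by (simp add: half_edges_Sigma)

lemma card_half_edges: "card (half_edges n d) = (\<Sum>i<n. d i)"
  by (simp add: half_edges_Sigma card_SigmaI)

lemma card_half_edges_at_le: "card (half_edges_at (half_edges n d) i) \<le> d i"
proof -
  have "half_edges_at (half_edges n d) i \<subseteq> Pair i ` {..<d i}"
    by (auto simp: half_edges_at_def half_edges_def)
  then have "card (half_edges_at (half_edges n d) i) \<le> card (Pair i ` {..<d i})"
    by (intro card_mono) auto
  also have "\<dots> \<le> d i"
    using card_image_le[of "{..<d i}" "Pair i"] by simp
  finally show ?thesis .
qed

lemma cm_X_eq_card_matched:
  assumes "f \<in> pairings H" "i \<noteq> j"
  shows "cm_X H f i j = card {h\<in>half_edges_at H i. f h \<in> half_edges_at H j}"
proof -
  have "{h\<in>H. fst h = i \<and> fst (f h) = j} = {h\<in>half_edges_at H i. f h \<in> half_edges_at H j}"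
    using pairings_closed[OF assms(1)] by (auto simp: half_edges_at_def)
  then show ?thesis using assms(2) by (simp add: cm_X_def)
qed

lemma cm_X_self_le:
  assumes "f \<in> pairings H"
  shows "cm_X H f i i \<le> card {h\<in>half_edges_at H i. f h \<in> half_edges_at H i}"
proof -
  have "{h\<in>H. fst h = i \<and> fst (f h) = i} = {h\<in>half_edges_at H i. f h \<in> half_edges_at H i}"
    using pairings_closed[OF assms] by (auto simp: half_edges_at_def)
  then show ?thesis by (simp add: cm_X_def)
qed

lemma min_sq_div_le_powr:
  fixes x m s :: real
  assumes "0 \<le> x" "0 < m" "1 \<le> s" "s \<le> 2"
  shows "min x (x^2 / m) \<le> x powr s * m powr (1 - s)"
proof (cases "x = 0")
  case False
  then have x: "x > 0" using assms by simp
  define t where "t = x / m"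
  have t: "t > 0" using x assms by (simp add: t_def)
  have eq: "x powr s * m powr (1 - s) = x * t powr (s - 1)"
    using x assms by (simp add: t_def powr_divide powr_diff powr_mult_base)
  show ?thesis
  proof (cases "t \<le> 1")
    case True
    have "t powr 1 \<le> t powr (s - 1)" using True t assms by (intro powr_mono') auto
    then have "t \<le> t powr (s - 1)" using t by simp
    moreover have "x^2 / m = x * t" by (simp add: t_def power2_eq_square)
    ultimately show ?thesis using eq x by (simp add: min_le_iff_disj)
  next
    case False
    have "1 \<le> t powr (s - 1)" using False assms by (intro ge_one_powr_ge_zero) auto
    then show ?thesis using eq x by (simp add: min_le_iff_disj)
  qed
qed simp

lemma min_twice_sq_le_powr:
  fixes a s :: real
  assumes "0 \<le> a" "1 \<le> s" "s \<le> 2"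
  shows "min a (2 * a^2) \<le> 2 * a powr s"
proof (cases "a = 0")
  case False
  then have a: "a > 0" using assms by simp
  show ?thesis
  proof (cases "a \<le> 1")
    case True
    have "a powr 2 \<le> a powr s" using True a assms by (intro powr_mono') auto
    then show ?thesis using a by (simp add: min_le_iff_disj)
  next
    case False
    then have "a powr 1 \<le> a powr s" using assms by (intro powr_mono) auto
    then show ?thesis using a by (simp add: min_le_iff_disj)
  qed
qed simp

lemma min_self_loops_le:
  fixes x y m M s :: real
  assumes "0 \<le> x" "x \<le> y" "0 < m" "m \<le> M - 1" "1 \<le> s" "s \<le> 2"
  shows "min x (x^2 / (M - 1)) \<le> m powr (1 - s) * y powr s"
proof -
  have "min x (x^2 / (M - 1)) \<le> x powr s * (M - 1) powr (1 - s)"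
    using assms by (intro min_sq_div_le_powr) auto
  also have "\<dots> \<le> y powr s * m powr (1 - s)"
    using assms by (intro mult_mono powr_mono2 powr_mono2') auto
  finally show ?thesis by (simp only: mult.commute)
qed

lemma min_multi_edges_le:
  fixes x y m M s :: real
  assumes "0 \<le> x" "x \<le> y" "0 < m" "m \<le> M - 1" "5 \<le> M" "1 \<le> s" "s \<le> 2"
  shows "min (x / (M - 1)) (x^2 / ((M - 1) * (M - 3))) \<le> 2 * m powr (- s) * y powr s"
proof -
  define a where "a = x / (M - 1)"
  have a: "0 \<le> a" using assms by (simp add: a_def)
  have "(M - 1) * (M - 1) \<le> 2 * ((M - 1) * (M - 3))"
    using assms mult_nonneg_nonneg[of "M - 1" "M - 5"] by (simp add: algebra_simps)
  then have "1 / ((M - 1) * (M - 3)) \<le> 2 / ((M - 1) * (M - 1))"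
    using assms by (simp add: divide_simps)
  then have "x^2 * (1 / ((M - 1) * (M - 3))) \<le> x^2 * (2 / ((M - 1) * (M - 1)))"
    by (rule mult_left_mono) simp
  then have "x^2 / ((M - 1) * (M - 3)) \<le> 2 * a^2"
    by (simp add: a_def power2_eq_square mult.commute)
  then have "min (x / (M - 1)) (x^2 / ((M - 1) * (M - 3))) \<le> min a (2 * a^2)"
    by (simp add: a_def min.coboundedI2 min_le_iff_disj)
  also have "\<dots> \<le> 2 * a powr s" using a assms by (intro min_twice_sq_le_powr) auto
  also have "a powr s = x powr s * (M - 1) powr (- s)"
    using assms by (simp add: a_def powr_divide powr_minus_divide)
  also have "2 * (x powr s * (M - 1) powr (- s)) \<le> 2 * (y powr s * m powr (- s))"
    using assms by (intro mult_left_mono mult_mono powr_mono2 powr_mono2') auto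
  finally show ?thesis by (simp only: mult_ac)
qed

text \<open>A bound on the conditional mean of the removed edges in terms of the sampled degrees \<open>D\<close>;
  the \<open>+ 1\<close> absorbs the half-edge added for parity, and \<open>m\<close> is a lower bound for the number of
  half-edges minus one.\<close>

definition removed_edges_bound :: "nat \<Rightarrow> real \<Rightarrow> real \<Rightarrow> (nat \<Rightarrow> nat) \<Rightarrow> real" where
  "removed_edges_bound n s m D =
     (\<Sum>i<n. m powr (1 - s) * (real (D i) + 1) powr s) +
     (\<Sum>(i, j)\<in>{(i, j). i < j \<and> j < n}.
        2 * m powr (- s) * ((real (D i) + 1) powr s * (real (D j) + 1) powr s))"

lemma removed_edges_bound_nonneg: "0 \<le> removed_edges_bound n s m D"
  unfolding removed_edges_bound_def by (intro add_nonneg_nonneg sum_nonneg) (auto simp: case_prod_unfold)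

locale configuration_model =
  fixes n :: nat and d :: "nat \<Rightarrow> nat"
begin

abbreviation "H \<equiv> half_edges n d"
abbreviation "M \<equiv> card H"

lemma sum_cm_X_self_le:
  assumes "2 \<le> M"
  shows "(\<Sum>f\<in>pairings H. real (cm_X H f i i))
    \<le> real (card (pairings H)) * min (real (d i)) (real (d i)^2 / (real M - 1))"
proof -
  let ?A = "half_edges_at H i"
  have le_matched: "cm_X H f i i \<le> card {h\<in>?A. f h \<in> ?A}" if "f \<in> pairings H" for f
    using that by (rule cm_X_self_le)
  have "(\<Sum>f\<in>pairings H. real (cm_X H f i i)) \<le> (\<Sum>f\<in>pairings H. real (card {h\<in>?A. f h \<in> ?A}))"
    using le_matched by (intro sum_mono) simp
  also have "\<dots> \<le> real (card (pairings H)) * (real (card ?A) * real (card ?A) / (real M - 1))"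
    using assms by (intro sum_card_matched_le finite_half_edges half_edges_at_subset)
  also have "\<dots> \<le> real (card (pairings H)) * (real (d i)^2 / (real M - 1))"
    using assms card_half_edges_at_le[of n d i]
    by (intro mult_left_mono divide_right_mono) (auto simp: power2_eq_square mult_mono)
  finally have quadratic: "(\<Sum>f\<in>pairings H. real (cm_X H f i i)) \<le> real (card (pairings H)) * (real (d i)^2 / (real M - 1))" .
  have "cm_X H f i i \<le> d i" if "f \<in> pairings H" for f
    using le_matched[OF that] card_mono[of ?A "{h\<in>?A. f h \<in> ?A}"] card_half_edges_at_le[of n d i]
      finite_subset[OF half_edges_at_subset finite_half_edges]
    by fastforce
  then have linear: "(\<Sum>f\<in>pairings H. real (cm_X H f i i)) \<le> real (card (pairings H)) * real (d i)"
    by (intro sum_bounded_above) simp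
  show ?thesis using quadratic linear by (simp add: min_def)
qed

lemma sum_cm_X_excess_le:
  assumes "4 \<le> M" "i \<noteq> j"
  shows "(\<Sum>f\<in>pairings H. real (cm_X H f i j - (if cm_X H f i j > 0 then 1 else 0)))
    \<le> real (card (pairings H)) * min (real (d i) * real (d j) / (real M - 1))
        ((real (d i) * real (d j))^2 / ((real M - 1) * (real M - 3)))"
proof -
  let ?A = "half_edges_at H i" and ?B = "half_edges_at H j"
  let ?X = "\<lambda>f. card {h\<in>?A. f h \<in> ?B}"
  have X: "cm_X H f i j = ?X f" if "f \<in> pairings H" for f
    using that assms(2) by (rule cm_X_eq_card_matched)
  have excess_le: "x - (if x > 0 then 1 else 0) \<le> x" "x - (if x > 0 then 1 else 0) \<le> x * (x - 1)" for x :: nat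
    by (cases x; simp)+
  have dA: "real (card ?A) \<le> real (d i)" and dB: "real (card ?B) \<le> real (d j)"
    using card_half_edges_at_le by simp_all
  have "(\<Sum>f\<in>pairings H. real (cm_X H f i j - (if cm_X H f i j > 0 then 1 else 0)))
      \<le> (\<Sum>f\<in>pairings H. real (?X f))"
    using excess_le(1) X by (intro sum_mono) simp
  also have "\<dots> \<le> real (card (pairings H)) * (real (card ?A) * real (card ?B) / (real M - 1))"
    using assms by (intro sum_card_matched_le finite_half_edges half_edges_at_subset) auto
  also have "\<dots> \<le> real (card (pairings H)) * (real (d i) * real (d j) / (real M - 1))"
    using assms dA dB by (intro mult_left_mono divide_right_mono mult_mono) auto
  finally have first: "(\<Sum>f\<in>pairings H. real (cm_X H f i j - (if cm_X H f i j > 0 then 1 else 0)))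
      \<le> real (card (pairings H)) * (real (d i) * real (d j) / (real M - 1))" .
  have disj: "?A \<inter> ?B = {}" using assms(2) by (auto simp: half_edges_at_def)
  have "(\<Sum>f\<in>pairings H. real (cm_X H f i j - (if cm_X H f i j > 0 then 1 else 0)))
      \<le> (\<Sum>f\<in>pairings H. real (?X f * (?X f - 1)))"
  proof (intro sum_mono)
    fix f assume f: "f \<in> pairings H"
    show "real (cm_X H f i j - (if cm_X H f i j > 0 then 1 else 0)) \<le> real (?X f * (?X f - 1))"
      unfolding of_nat_le_iff X[OF f] by (rule excess_le(2))
  qed
  also have "\<dots> \<le> real (card (pairings H)) *
      (real (card ?A)^2 * real (card ?B)^2 / ((real M - 1) * (real M - 3)))"
    using assms disj by (intro sum_card_matched_pairs_le finite_half_edges half_edges_at_subset)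
  also have "\<dots> \<le> real (card (pairings H)) * ((real (d i) * real (d j))^2 / ((real M - 1) * (real M - 3)))"
    unfolding power_mult_distrib using assms dA dB
    by (intro mult_left_mono divide_right_mono mult_mono power_mono) auto
  finally show ?thesis using first by (simp add: min_def)
qed

lemma sum_cm_Z_le:
  fixes D :: "nat \<Rightarrow> nat" and s m :: real
  assumes "\<And>i. d i \<le> D i + 1" "1 \<le> s" "s \<le> 2" "0 < m" "m \<le> real M - 1" "5 \<le> M"
  shows "(\<Sum>f\<in>pairings H. real (cm_Z n H f)) \<le> real (card (pairings H)) * removed_edges_bound n s m D"
proof -
  let ?S = "{(i, j). i < j \<and> j < n}"
  let ?c = "real (card (pairings H))"
  have dD: "real (d i) \<le> real (D i) + 1" for i using assms(1)[of i] by simp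
  have self: "(\<Sum>f\<in>pairings H. real (cm_X H f i i)) \<le> ?c * (m powr (1 - s) * (real (D i) + 1) powr s)" for i
  proof -
    have "(\<Sum>f\<in>pairings H. real (cm_X H f i i)) \<le> ?c * min (real (d i)) (real (d i)^2 / (real M - 1))"
      using assms(6) by (intro sum_cm_X_self_le) simp
    also have "\<dots> \<le> ?c * (m powr (1 - s) * (real (D i) + 1) powr s)"
      using assms dD by (intro mult_left_mono min_self_loops_le) auto
    finally show ?thesis .
  qed
  have multi: "(\<Sum>f\<in>pairings H. real (cm_X H f i j - (if cm_X H f i j > 0 then 1 else 0)))
      \<le> ?c * (2 * m powr (- s) * ((real (D i) + 1) powr s * (real (D j) + 1) powr s))"
    if "(i, j) \<in> ?S" for i j
  proof -
    have "(\<Sum>f\<in>pairings H. real (cm_X H f i j - (if cm_X H f i j > 0 then 1 else 0)))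
        \<le> ?c * min (real (d i) * real (d j) / (real M - 1))
            ((real (d i) * real (d j))^2 / ((real M - 1) * (real M - 3)))"
      using assms(6) that by (intro sum_cm_X_excess_le) auto
    also have "\<dots> \<le> ?c * (2 * m powr (- s) * ((real (D i) + 1) * (real (D j) + 1)) powr s)"
      using assms dD by (intro mult_left_mono min_multi_edges_le mult_mono) auto
    also have "\<dots> = ?c * (2 * m powr (- s) * ((real (D i) + 1) powr s * (real (D j) + 1) powr s))"
      by (subst powr_mult) auto
    finally show ?thesis .
  qed
  have "(\<Sum>f\<in>pairings H. real (cm_Z n H f)) =
      (\<Sum>i<n. \<Sum>f\<in>pairings H. real (cm_X H f i i)) +
      (\<Sum>(i, j)\<in>?S. \<Sum>f\<in>pairings H. real (cm_X H f i j - (if cm_X H f i j > 0 then 1 else 0)))"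
    unfolding cm_Z_def by (simp add: sum.distrib sum.swap[of _ "pairings H"] case_prod_unfold)
  also have "\<dots> \<le> (\<Sum>i<n. ?c * (m powr (1 - s) * (real (D i) + 1) powr s)) +
      (\<Sum>(i, j)\<in>?S. ?c * (2 * m powr (- s) * ((real (D i) + 1) powr s * (real (D j) + 1) powr s)))"
    using self multi by (intro add_mono sum_mono) (auto simp: case_prod_unfold)
  also have "\<dots> = ?c * removed_edges_bound n s m D"
    by (simp add: removed_edges_bound_def sum_distrib_left distrib_left case_prod_unfold)
  finally show ?thesis .
qed

end

lemma ennreal_sum_mult:
  fixes c :: real and f :: "'a \<Rightarrow> real"
  assumes "0 \<le> c" "\<And>x. 0 \<le> f x"
  shows "ennreal (\<Sum>x\<in>A. c * f x) = (\<Sum>x\<in>A. ennreal c * ennreal (f x))"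
proof -
  have "ennreal (\<Sum>x\<in>A. c * f x) = (\<Sum>x\<in>A. ennreal (c * f x))"
    using assms by (intro sum_ennreal[symmetric] mult_nonneg_nonneg)
  also have "\<dots> = (\<Sum>x\<in>A. ennreal c * ennreal (f x))"
    using assms by (intro sum.cong refl ennreal_mult)
  finally show ?thesis .
qed

lemma ennreal_removed_edges_bound:
  "ennreal (removed_edges_bound n s m D) =
     (\<Sum>i<n. ennreal (m powr (1 - s)) * ennreal ((real (D i) + 1) powr s)) +
     (\<Sum>(i, j)\<in>{(i, j). i < j \<and> j < n}. ennreal (2 * m powr (- s)) *
        (ennreal ((real (D i) + 1) powr s) * ennreal ((real (D j) + 1) powr s)))"
proof -
  let ?S = "{(i, j). i < j \<and> j < n}"
  have "ennreal (removed_edges_bound n s m D) =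
     ennreal (\<Sum>i<n. m powr (1 - s) * (real (D i) + 1) powr s) +
     ennreal (\<Sum>x\<in>?S. 2 * m powr (- s) * ((real (D (fst x)) + 1) powr s * (real (D (snd x)) + 1) powr s))"
    unfolding removed_edges_bound_def case_prod_unfold by (intro ennreal_plus sum_nonneg) auto
  also have "\<dots> = (\<Sum>i<n. ennreal (m powr (1 - s)) * ennreal ((real (D i) + 1) powr s)) +
     (\<Sum>x\<in>?S. ennreal (2 * m powr (- s)) *
        ennreal ((real (D (fst x)) + 1) powr s * (real (D (snd x)) + 1) powr s))"
    by (intro arg_cong2[where f = "(+)"] ennreal_sum_mult) auto
  also have "\<dots> = (\<Sum>i<n. ennreal (m powr (1 - s)) * ennreal ((real (D i) + 1) powr s)) +
     (\<Sum>x\<in>?S. ennreal (2 * m powr (- s)) *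
        (ennreal ((real (D (fst x)) + 1) powr s) * ennreal ((real (D (snd x)) + 1) powr s)))"
    by (intro arg_cong2[where f = "(+)"] refl sum.cong arg_cong2[where f = "(*)"] ennreal_mult) auto
  finally show ?thesis by (simp only: case_prod_unfold)
qed

lemma prod_if_two:
  fixes F :: "nat \<Rightarrow> 'a::comm_monoid_mult"
  assumes "i < n" "j < n" "i \<noteq> j"
  shows "(\<Prod>x<n. if x = i \<or> x = j then F x else 1) = F i * F j"
proof -
  have "(\<Prod>x<n. if x = i \<or> x = j then F x else 1) = (\<Prod>x\<in>{x\<in>{..<n}. x = i \<or> x = j}. F x)"
    by (rule prod.inter_filter[symmetric]) simp
  also have "{x\<in>{..<n}. x = i \<or> x = j} = {i, j}" using assms by auto
  finally show ?thesis using assms by simp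
qed

lemma nn_integral_Pi_pmf_component:
  fixes i n :: nat
  assumes "i < n"
  shows "(\<integral>\<^sup>+D. h (D i) \<partial>Pi_pmf {..<n} dflt (\<lambda>_. p)) = (\<integral>\<^sup>+v. h v \<partial>p)"
proof -
  have "(\<integral>\<^sup>+D. h (D i) \<partial>Pi_pmf {..<n} dflt (\<lambda>_. p)) = (\<integral>\<^sup>+v. h v \<partial>map_pmf (\<lambda>D. D i) (Pi_pmf {..<n} dflt (\<lambda>_. p)))"
    by simp
  also have "map_pmf (\<lambda>D. D i) (Pi_pmf {..<n} dflt (\<lambda>_. p)) = p"
    using assms by (subst Pi_pmf_component) auto
  finally show ?thesis .
qed

lemma nn_integral_Pi_pmf_two_components:
  fixes h :: "'a \<Rightarrow> ennreal" and i j n :: nat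
  assumes "i < n" "j < n" "i \<noteq> j"
  shows "(\<integral>\<^sup>+D. h (D i) * h (D j) \<partial>Pi_pmf {..<n} dflt (\<lambda>_. p)) = (\<integral>\<^sup>+v. h v \<partial>p) * (\<integral>\<^sup>+v. h v \<partial>p)"
proof -
  define F where "F x v = (if x = i \<or> x = j then h v else 1)" for x v
  have "(\<integral>\<^sup>+D. h (D i) * h (D j) \<partial>Pi_pmf {..<n} dflt (\<lambda>_. p)) =
        (\<integral>\<^sup>+D. (\<Prod>x<n. F x (D x)) \<partial>Pi_pmf {..<n} dflt (\<lambda>_. p))"
  proof (intro nn_integral_cong)
    fix D :: "nat \<Rightarrow> 'a"
    show "h (D i) * h (D j) = (\<Prod>x<n. F x (D x))"
      unfolding F_def using prod_if_two[OF assms, of "\<lambda>x. h (D x)"] by simp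
  qed
  also have "\<dots> = (\<Prod>x<n. \<integral>\<^sup>+v. F x v \<partial>p)"
    by (rule nn_integral_prod_Pi_pmf) simp
  also have "\<dots> = (\<Prod>x<n. if x = i \<or> x = j then (\<integral>\<^sup>+v. h v \<partial>p) else 1)"
    by (intro prod.cong refl) (simp add: F_def measure_pmf.emeasure_space_1)
  also have "\<dots> = (\<integral>\<^sup>+v. h v \<partial>p) * (\<integral>\<^sup>+v. h v \<partial>p)"
    by (rule prod_if_two[OF assms])
  finally show ?thesis .
qed

lemma card_increasing_pairs_le: "card {(i, j). i < j \<and> j < (n::nat)} \<le> n * n"
proof -
  have "card {(i, j). i < j \<and> j < (n::nat)} \<le> card ({..<n} \<times> {..<n})"
    by (intro card_mono) auto
  then show ?thesis by (simp add: card_cartesian_product)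
qed

lemma nn_integral_removed_edges_bound_le:
  fixes p :: "nat pmf"
  assumes \<mu>: "(\<integral>\<^sup>+v. ennreal ((real v + 1) powr s) \<partial>p) = ennreal \<mu>" "0 \<le> \<mu>"
  shows "(\<integral>\<^sup>+D. ennreal (removed_edges_bound n s m D) \<partial>Pi_pmf {..<n} 0 (\<lambda>_. p)) \<le>
     ennreal (real n * \<mu> * m powr (1 - s) + real n * real n * (2 * \<mu> * \<mu> * m powr (- s)))"
proof -
  let ?Pi = "Pi_pmf {..<n} 0 (\<lambda>_. p)"
  let ?S = "{(i, j). i < j \<and> j < (n::nat)}"
  define g where "g v = ennreal ((real v + 1) powr s)" for v :: nat
  have "(\<integral>\<^sup>+D. ennreal (removed_edges_bound n s m D) \<partial>?Pi) =
      (\<Sum>i<n. ennreal (m powr (1 - s)) * (\<integral>\<^sup>+D. g (D i) \<partial>?Pi)) +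
      (\<Sum>(i, j)\<in>?S. ennreal (2 * m powr (- s)) * (\<integral>\<^sup>+D. g (D i) * g (D j) \<partial>?Pi))"
    unfolding ennreal_removed_edges_bound g_def case_prod_unfold
    by (simp add: nn_integral_add nn_integral_sum nn_integral_cmult)
  also have "\<dots> = (\<Sum>i<n. ennreal (m powr (1 - s)) * ennreal \<mu>) +
      (\<Sum>(i, j)\<in>?S. ennreal (2 * m powr (- s)) * (ennreal \<mu> * ennreal \<mu>))"
  proof (intro arg_cong2[where f = "(+)"] sum.cong refl)
    fix i assume "i \<in> {..<n}"
    then show "ennreal (m powr (1 - s)) * (\<integral>\<^sup>+D. g (D i) \<partial>?Pi) = ennreal (m powr (1 - s)) * ennreal \<mu>"
      using nn_integral_Pi_pmf_component[where h = g] \<mu>(1) by (simp add: g_def)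
  next
    fix x assume "x \<in> ?S"
    then obtain i j where "x = (i, j)" "i < n" "j < n" "i \<noteq> j" by auto
    then show "(case x of (i, j) \<Rightarrow> ennreal (2 * m powr (- s)) * (\<integral>\<^sup>+D. g (D i) * g (D j) \<partial>?Pi)) =
        (case x of (i, j) \<Rightarrow> ennreal (2 * m powr (- s)) * (ennreal \<mu> * ennreal \<mu>))"
      using nn_integral_Pi_pmf_two_components[where h = g] \<mu>(1) by (simp add: g_def)
  qed
  also have "\<dots> = ennreal (real n * \<mu> * m powr (1 - s) + real (card ?S) * (2 * \<mu> * \<mu> * m powr (- s)))"
    using \<mu>(2) by (simp add: ennreal_mult[symmetric] ennreal_plus[symmetric] ennreal_of_nat_eq_real_of_nat mult_ac del: ennreal_plus)
  also have "\<dots> \<le> ennreal (real n * \<mu> * m powr (1 - s) + real n * real n * (2 * \<mu> * \<mu> * m powr (- s)))"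
    using \<mu>(2) card_increasing_pairs_le[of n]
    by (intro ennreal_leI add_left_mono mult_right_mono) (auto simp flip: of_nat_mult)
  finally show ?thesis .
qed

lemma cm_degrees_le: "cm_degrees n D i \<le> D i + 1"
  by (auto simp: cm_degrees_def)

lemma cm_degrees_ge: "D i \<le> cm_degrees n D i"
  by (auto simp: cm_degrees_def)

lemma even_sum_cm_degrees: "even (\<Sum>i<n. cm_degrees n D i)"
proof (cases "odd (\<Sum>i<n. D i)")
  case True
  then obtain k where n: "n = Suc k" by (cases n) auto
  then have "(\<Sum>i<n. cm_degrees n D i) = (\<Sum>i<Suc k. (D(k := Suc (D k))) i)"
    using True by (simp add: cm_degrees_def)
  also have "\<dots> = (\<Sum>i<n. D i) + 1" using n by simp
  finally have "(\<Sum>i<n. cm_degrees n D i) = (\<Sum>i<n. D i) + 1" .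
  then show ?thesis using True by simp
next
  case False then show ?thesis by (simp add: cm_degrees_def)
qed

lemma slowly_varying_tail_doubling:
  fixes p :: "nat pmf" and L :: "real \<Rightarrow> real" and \<gamma> \<beta> :: real
  assumes sv: "slowly_varying L"
    and tail: "\<And>t. t > 0 \<Longrightarrow> measure_pmf.prob p {d. real d > t} = L t * t powr (- \<gamma>)"
    and "\<beta> < \<gamma>"
  obtains x0 where "1 \<le> x0" "\<And>x. x0 \<le> x \<Longrightarrow>
    measure_pmf.prob p {d. real d > 2 * x} \<le> 2 powr (- \<beta>) * measure_pmf.prob p {d. real d > x}"
proof -
  define r where "r = 2 powr (\<gamma> - \<beta>)"
  have "1 < r" unfolding r_def using assms(3) powr_less_mono[of 0 "\<gamma> - \<beta>" 2] by simp
  moreover have "((\<lambda>x. L (2 * x) / L x) \<longlongrightarrow> 1) at_top" using sv by (simp add: slowly_varying_def)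
  ultimately have "eventually (\<lambda>x. L (2 * x) / L x < r) at_top" by (rule order_tendstoD(2)[rotated])
  then obtain N where N: "\<And>x. x \<ge> N \<Longrightarrow> L (2 * x) / L x < r" by (auto simp: eventually_at_top_linorder)
  show thesis
  proof (rule that[of "max N 1"])
    fix x assume x: "max N 1 \<le> x"
    then have "0 < x" "0 < L x" using sv by (auto simp: slowly_varying_def)
    then have "L (2 * x) \<le> r * L x" using N[of x] x by (simp add: divide_less_eq)
    then have "L (2 * x) * (2 * x) powr (- \<gamma>) \<le> r * L x * (2 * x) powr (- \<gamma>)"
      by (simp add: mult_right_mono)
    also have "\<dots> = 2 powr (- \<beta>) * (L x * x powr (- \<gamma>))"
      by (simp add: r_def powr_mult powr_add[symmetric])
    finally show "measure_pmf.prob p {d. real d > 2 * x} \<le> 2 powr (- \<beta>) * measure_pmf.prob p {d. real d > x}"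
      using tail[of x] tail[of "2 * x"] \<open>0 < x\<close> by simp
  qed simp
qed

lemma slowly_varying_tail_geometric:
  fixes p :: "nat pmf" and L :: "real \<Rightarrow> real" and \<gamma> \<beta> :: real
  assumes sv: "slowly_varying L"
    and tail: "\<And>t. t > 0 \<Longrightarrow> measure_pmf.prob p {d. real d > t} = L t * t powr (- \<gamma>)"
    and "\<beta> < \<gamma>"
  obtains x0 where "1 \<le> x0" "\<And>k. measure_pmf.prob p {d. real d > 2^k * x0} \<le> (2 powr (- \<beta>))^k"
proof -
  obtain x0 where x0: "1 \<le> x0" and doubling: "\<And>x. x0 \<le> x \<Longrightarrow>
      measure_pmf.prob p {d. real d > 2 * x} \<le> 2 powr (- \<beta>) * measure_pmf.prob p {d. real d > x}"
    using slowly_varying_tail_doubling[OF assms] by blast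
  have "measure_pmf.prob p {d. real d > 2^k * x0} \<le> (2 powr (- \<beta>))^k" for k
  proof (induction k)
    case (Suc k)
    have "x0 \<le> 2^k * x0" using x0 by simp
    then have "measure_pmf.prob p {d. real d > 2 * (2^k * x0)} \<le> 2 powr (- \<beta>) * measure_pmf.prob p {d. real d > 2^k * x0}"
      by (rule doubling)
    also have "\<dots> \<le> 2 powr (- \<beta>) * (2 powr (- \<beta>))^k" using Suc by (intro mult_left_mono) auto
    finally show ?case by (simp add: mult.assoc)
  qed simp
  then show thesis using x0 that by blast
qed

lemma ennreal_powr_le_dyadic_sum:
  fixes x0 y s :: real
  assumes x0: "x0 \<ge> 1" and y: "y \<ge> 0" and s: "s \<ge> 0"
  shows "ennreal ((y + 1) powr s) \<le> ennreal ((2 * x0) powr s) +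
     (\<Sum>k. ennreal ((2^(k+2) * x0) powr s) * indicator {z. z > 2^k * x0} y)"
proof (cases "y \<le> x0")
  case True
  have "(y + 1) powr s \<le> (2 * x0) powr s" using True x0 y s by (intro powr_mono2) auto
  then have "ennreal ((y + 1) powr s) \<le> ennreal ((2 * x0) powr s)" by (rule ennreal_leI)
  then show ?thesis by (rule order_trans[OF _ add_increasing2[OF zero_le order_refl]])
next
  case False
  obtain n0 where n0: "y < 2^n0" using real_arch_pow[of 2 y] by auto
  have ex: "\<exists>n. y \<le> 2^n * x0"
  proof
    have "(2::real)^n0 * 1 \<le> 2^n0 * x0" using x0 by (intro mult_left_mono) auto
    then show "y \<le> 2^n0 * x0" using n0 by linarith
  qed
  define n where "n = (LEAST n. y \<le> 2^n * x0)"
  have n1: "y \<le> 2^n * x0" unfolding n_def by (rule LeastI_ex[OF ex])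
  have n0': "n \<noteq> 0" using n1 False by (intro notI) simp
  then obtain k where k: "n = Suc k" by (cases n) auto
  have "k < n" using k by simp
  then have k1: "\<not> y \<le> 2^k * x0" unfolding n_def by (rule not_less_Least)
  have a: "y \<le> 2^(k+1) * x0" using n1 k by simp
  have "(1::real) \<le> 2^(k+1)" by (rule one_le_power) simp
  then have "(1::real) * 1 \<le> 2^(k+1) * x0" using x0 by (intro mult_mono) auto
  then have b: "1 \<le> 2^(k+1) * x0" by simp
  have c: "(2::real)^(k+2) * x0 = 2 * (2^(k+1) * x0)" by simp
  have yk: "y + 1 \<le> 2^(k+2) * x0" using a b c by linarith
  have ind: "indicator {z. z > 2^k * x0} y = (1::ennreal)" using k1 by (simp add: indicator_def)
  have "(y + 1) powr s \<le> (2^(k+2) * x0) powr s" using yk y s by (intro powr_mono2) auto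
  then have le: "ennreal ((y + 1) powr s) \<le> ennreal ((2^(k+2) * x0) powr s) * indicator {z. z > 2^k * x0} y"
    unfolding ind by (simp add: ennreal_leI)
  also have "\<dots> \<le> (\<Sum>k. ennreal ((2^(k+2) * x0) powr s) * indicator {z. z > 2^k * x0} y)"
  proof -
    define F where "F = (\<lambda>k. ennreal ((2^(k+2) * x0) powr s) * indicator {z. z > 2^k * x0} y)"
    have "sum F {k} \<le> suminf F" by (rule sum_le_suminf) auto
    moreover have "sum F {k} = F k" by simp
    ultimately have "F k \<le> suminf F" by simp
    then show ?thesis unfolding F_def .
  qed
  finally show ?thesis by (rule order_trans[OF _ add_increasing[OF zero_le order_refl]])
qed

lemma nn_integral_indicator_tail_le:
  fixes p :: "nat pmf" and x b c :: real
  assumes "measure_pmf.prob p {d. real d > x} \<le> b" "0 \<le> c"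
  shows "(\<integral>\<^sup>+d. ennreal c * indicator {z. z > x} (real d) \<partial>p) \<le> ennreal (c * b)"
proof -
  have "indicator {z. z > x} (real d) = (indicator {d. real d > x} d :: ennreal)" for d :: nat
    by (simp add: indicator_def)
  then have "(\<integral>\<^sup>+d. ennreal c * indicator {z. z > x} (real d) \<partial>p) = ennreal c * emeasure p {d. real d > x}"
    by (simp add: nn_integral_cmult_indicator)
  also have "\<dots> = ennreal (c * measure_pmf.prob p {d. real d > x})"
    using assms(2) by (simp add: measure_pmf.emeasure_eq_measure ennreal_mult)
  also have "\<dots> \<le> ennreal (c * b)"
    using assms by (intro ennreal_leI mult_left_mono)
  finally show ?thesis .
qed

lemma nn_integral_powr_less_top:
  fixes p :: "nat pmf" and L :: "real \<Rightarrow> real" and \<gamma> s :: real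
  assumes sv: "slowly_varying L"
    and tail: "\<And>t. t > 0 \<Longrightarrow> measure_pmf.prob p {d. real d > t} = L t * t powr (- \<gamma>)"
    and s: "0 \<le> s" "s < \<gamma>"
  shows "(\<integral>\<^sup>+d. ennreal ((real d + 1) powr s) \<partial>p) < \<infinity>"
proof -
  define \<beta> where "\<beta> = (s + \<gamma>) / 2"
  have b: "\<beta> < \<gamma>" "s < \<beta>" using s by (auto simp: \<beta>_def)
  obtain x0 where x0: "x0 \<ge> 1" and T: "\<And>k. measure_pmf.prob p {d. real d > 2^k * x0} \<le> (2 powr (- \<beta>))^k"
    using slowly_varying_tail_geometric[OF sv tail b(1)] by blast
  define \<rho> where "\<rho> = 2 powr (s - \<beta>)"
  have \<rho>: "0 \<le> \<rho>" "\<rho> < 1" unfolding \<rho>_def using b powr_less_mono[of "s - \<beta>" 0 2] by auto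
  define K where "K = (4 * x0) powr s"
  have scale: "(2^(k+2) * x0) powr s = K * (2 powr s)^k" for k
  proof -
    have "(2^(k+2) * x0) powr s = (4 * x0) powr s * (2 powr real k) powr s"
      by (simp add: powr_mult power_add mult_ac powr_realpow)
    then show ?thesis by (simp add: K_def powr_powr powr_power mult.commute)
  qed
  have "(\<integral>\<^sup>+d. ennreal ((real d + 1) powr s) \<partial>p) \<le>
      (\<integral>\<^sup>+d. ennreal ((2 * x0) powr s) +
        (\<Sum>k. ennreal ((2^(k+2) * x0) powr s) * indicator {z. z > 2^k * x0} (real d)) \<partial>p)"
    using x0 s by (intro nn_integral_mono ennreal_powr_le_dyadic_sum) auto
  also have "\<dots> = ennreal ((2 * x0) powr s) +
      (\<Sum>k. \<integral>\<^sup>+d. ennreal ((2^(k+2) * x0) powr s) * indicator {z. z > 2^k * x0} (real d) \<partial>p)"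
    by (simp add: nn_integral_add nn_integral_suminf measure_pmf.emeasure_space_1)
  also have "(\<Sum>k. \<integral>\<^sup>+d. ennreal ((2^(k+2) * x0) powr s) * indicator {z. z > 2^k * x0} (real d) \<partial>p)
      \<le> (\<Sum>k. ennreal (K * \<rho>^k))"
  proof (intro suminf_le allI summableI)
    fix k
    have "K * (2 powr s)^k * (2 powr (- \<beta>))^k = K * (2 powr s * 2 powr (- \<beta>))^k"
      by (simp add: power_mult_distrib mult.assoc)
    also have "2 powr s * 2 powr (- \<beta>) = \<rho>"
      by (simp add: \<rho>_def powr_add[symmetric])
    finally have \<rho>k: "(2^(k+2) * x0) powr s * (2 powr (- \<beta>))^k = K * \<rho>^k"
      unfolding scale .
    show "(\<integral>\<^sup>+d. ennreal ((2^(k+2) * x0) powr s) * indicator {z. z > 2^k * x0} (real d) \<partial>p)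
        \<le> ennreal (K * \<rho>^k)"
      unfolding \<rho>k[symmetric] by (rule nn_integral_indicator_tail_le[OF T]) simp
  qed
  also have "(\<Sum>k. ennreal (K * \<rho>^k)) = ennreal (\<Sum>k. K * \<rho>^k)"
    using \<rho> by (intro suminf_ennreal2 summable_mult summable_geometric) (auto simp: K_def)
  finally show ?thesis by (simp add: add_mono_ennreal le_less_trans ennreal_add_less_top)
qed

lemma nn_integral_exp_neg_min:
  fixes p :: "nat pmf"
  shows "(\<integral>\<^sup>+v. ennreal (exp (- min (real v) 1)) \<partial>p)
    = ennreal (1 - measure_pmf.prob p {d. d \<noteq> 0} * (1 - exp (-1)))"
proof -
  define q where "q = measure_pmf.prob p {d. d \<noteq> 0}"
  have "(\<lambda>v. ennreal (exp (- min (real v) 1))) =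
      (\<lambda>v. indicator {0} v + ennreal (exp (-1)) * indicator {d. d \<noteq> 0} v)"
    by (auto simp: fun_eq_iff indicator_def)
  then have "(\<integral>\<^sup>+v. ennreal (exp (- min (real v) 1)) \<partial>p) =
      emeasure p {0} + ennreal (exp (-1)) * emeasure p {d. d \<noteq> 0}"
    by (simp add: nn_integral_add nn_integral_cmult)
  also have "emeasure p {d. d \<noteq> 0} = ennreal q"
    by (simp add: q_def measure_pmf.emeasure_eq_measure)
  also have "emeasure p {0} = ennreal (1 - q)"
  proof -
    have "{0::nat} = space (measure_pmf p) - {d. d \<noteq> 0}" by auto
    then show ?thesis
      using measure_pmf.prob_compl[of "{d. d \<noteq> 0}" p] by (simp add: q_def measure_pmf.emeasure_eq_measure)
  qed
  also have "ennreal (1 - q) + ennreal (exp (-1)) * ennreal q = ennreal (1 - q + exp (-1) * q)"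
    using measure_pmf.prob_le_1[of p] by (simp add: q_def ennreal_mult ennreal_plus[symmetric])
  also have "1 - q + exp (-1) * q = 1 - q * (1 - exp (-1))" by (simp add: algebra_simps)
  finally show ?thesis by (simp only: q_def)
qed

text \<open>An exponential Chebyshev bound with the test function \<open>exp (- min v 1)\<close>, which only sees
  whether a degree vanishes.\<close>

lemma indicator_sum_less_le_exp_prod:
  fixes D :: "nat \<Rightarrow> nat" and b :: real
  shows "indicator {D. real (\<Sum>i<n. D i) < b} D
    \<le> ennreal (exp b) * (\<Prod>i<n. ennreal (exp (- min (real (D i)) 1)))"
proof (cases "real (\<Sum>i<n. D i) < b")
  case True
  have "(\<Sum>i<n. min (real (D i)) 1) \<le> (\<Sum>i<n. real (D i))" by (intro sum_mono) auto
  then have "1 \<le> exp (b - (\<Sum>i<n. min (real (D i)) 1))" using True by simp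
  also have "\<dots> = exp b * exp (\<Sum>i<n. - min (real (D i)) 1)"
    by (simp add: exp_add[symmetric] sum_negf)
  also have "\<dots> = exp b * (\<Prod>i<n. exp (- min (real (D i)) 1))"
    by (simp add: exp_sum)
  finally have "ennreal 1 \<le> ennreal (exp b * (\<Prod>i<n. exp (- min (real (D i)) 1)))"
    by (rule ennreal_leI)
  then show ?thesis
    using True by (simp add: ennreal_mult prod_nonneg prod_ennreal)
qed simp

lemma prob_sum_less_le_exp:
  fixes p :: "nat pmf" and q :: real and n :: nat
  assumes q: "measure_pmf.prob p {d. d \<noteq> 0} = q"
  defines "a \<equiv> q * (1 - exp (-1))"
  shows "measure_pmf.prob (Pi_pmf {..<n} 0 (\<lambda>_. p)) {D. real (\<Sum>i<n. D i) < a / 2 * real n}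
         \<le> exp (- (a / 2) * real n)"
proof -
  let ?Pi = "Pi_pmf {..<n} 0 (\<lambda>_. p)"
  let ?B = "{D. real (\<Sum>i<n. D i) < a / 2 * real n}"
  have a: "0 \<le> a" "a \<le> 1"
    using q measure_pmf.prob_le_1[of p] by (auto simp: a_def mult_le_one)
  have "emeasure ?Pi ?B = (\<integral>\<^sup>+D. indicator ?B D \<partial>?Pi)" by simp
  also have "\<dots> \<le> (\<integral>\<^sup>+D. ennreal (exp (a / 2 * real n)) * (\<Prod>i<n. ennreal (exp (- min (real (D i)) 1))) \<partial>?Pi)"
    by (intro nn_integral_mono indicator_sum_less_le_exp_prod)
  also have "\<dots> = ennreal (exp (a / 2 * real n)) * (\<Prod>i<n. \<integral>\<^sup>+v. ennreal (exp (- min (real v) 1)) \<partial>p)"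
    by (simp add: nn_integral_cmult nn_integral_prod_Pi_pmf[where f = "\<lambda>_ v. ennreal (exp (- min (real v) 1))"])
  also have "(\<integral>\<^sup>+v. ennreal (exp (- min (real v) 1)) \<partial>p) = ennreal (1 - a)"
    unfolding a_def q[symmetric] by (rule nn_integral_exp_neg_min)
  also have "ennreal (exp (a / 2 * real n)) * (\<Prod>i<n. ennreal (1 - a)) = ennreal (exp (a / 2 * real n) * (1 - a)^n)"
    using a by (simp add: ennreal_power ennreal_mult)
  also have "\<dots> \<le> ennreal (exp (- (a / 2) * real n))"
  proof (intro ennreal_leI)
    have "exp (a / 2 * real n) * (1 - a)^n \<le> exp (a / 2 * real n) * exp (- a) ^ n"
      using a exp_ge_add_one_self[of "- a"] by (intro mult_left_mono power_mono) auto
    also have "\<dots> = exp (- (a / 2) * real n)"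
      by (simp add: exp_of_nat_mult[symmetric] exp_add[symmetric] algebra_simps)
    finally show "exp (a / 2 * real n) * (1 - a)^n \<le> exp (- (a / 2) * real n)" .
  qed
  finally show ?thesis by (simp add: measure_pmf.emeasure_eq_measure)
qed

lemma prob_pmf_of_set_gt_le:
  fixes g :: "'a \<Rightarrow> real"
  assumes "finite P" "P \<noteq> {}" "0 < t" "\<And>x. x \<in> P \<Longrightarrow> 0 \<le> g x"
  shows "measure_pmf.prob (pmf_of_set P) {x. t < g x} \<le> (\<Sum>x\<in>P. g x) / (real (card P) * t)"
proof -
  let ?B = "{x\<in>P. t < g x}"
  have "real (card ?B) * t = (\<Sum>x\<in>?B. t)" by simp
  also have "\<dots> \<le> (\<Sum>x\<in>?B. g x)" by (intro sum_mono) auto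
  also have "\<dots> \<le> (\<Sum>x\<in>P. g x)" using assms by (intro sum_mono2) auto
  finally have "real (card ?B) * t \<le> (\<Sum>x\<in>P. g x)" .
  moreover have "real (card P) > 0" using assms by (simp add: card_gt_0_iff)
  moreover have "P \<inter> {x. t < g x} = ?B" by auto
  ultimately show ?thesis
    using assms by (simp add: measure_pmf_of_set field_simps)
qed

lemma prob_cm_Z_gt_le:
  fixes n :: nat and D :: "nat \<Rightarrow> nat" and s m t :: real
  defines "H \<equiv> half_edges n (cm_degrees n D)"
  assumes "2 * m \<le> real (\<Sum>i<n. D i)" "6 \<le> m" "1 \<le> s" "s \<le> 2" "0 < t"
  shows "measure_pmf.prob (map_pmf (cm_Z n H) (pmf_of_set (pairings H))) {z. t < real z}
    \<le> removed_edges_bound n s m D / t"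
proof -
  have "(\<Sum>i<n. D i) \<le> card H"
    unfolding H_def card_half_edges by (intro sum_mono cm_degrees_ge)
  then have "real (\<Sum>i<n. D i) \<le> real (card H)" by (rule of_nat_mono)
  then have M: "2 * m \<le> real (card H)" using assms(2) by linarith
  have fin: "finite (pairings H)" unfolding H_def by (intro finite_pairings finite_half_edges)
  have ne: "pairings H \<noteq> {}"
    unfolding H_def by (intro pairings_nonempty finite_half_edges) (simp add: card_half_edges even_sum_cm_degrees)
  have "measure_pmf.prob (map_pmf (cm_Z n H) (pmf_of_set (pairings H))) {z. t < real z}
      = measure_pmf.prob (pmf_of_set (pairings H)) {f. t < real (cm_Z n H f)}"
    by (simp add: vimage_def)
  also have "\<dots> \<le> (\<Sum>f\<in>pairings H. real (cm_Z n H f)) / (real (card (pairings H)) * t)"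
    using fin ne assms(6) by (rule prob_pmf_of_set_gt_le) (rule of_nat_0_le_iff)
  also have "\<dots> \<le> (real (card (pairings H)) * removed_edges_bound n s m D) / (real (card (pairings H)) * t)"
  proof (intro divide_right_mono)
    have "5 \<le> card H" "m \<le> real (card H) - 1" using M assms(3) by linarith+
    then show "(\<Sum>f\<in>pairings H. real (cm_Z n H f)) \<le> real (card (pairings H)) * removed_edges_bound n s m D"
      unfolding H_def using assms(3-5) cm_degrees_le by (intro configuration_model.sum_cm_Z_le) auto
  qed (use assms(6) in simp)
  also have "\<dots> = removed_edges_bound n s m D / t"
    using fin ne by (simp add: card_gt_0_iff)
  finally show ?thesis .
qed

lemma emeasure_cm_Z_gt_le:
  fixes n :: nat and D :: "nat \<Rightarrow> nat" and s m t :: real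
  defines "H \<equiv> half_edges n (cm_degrees n D)"
  assumes "6 \<le> m" "1 \<le> s" "s \<le> 2" "0 < t"
  shows "emeasure (map_pmf (cm_Z n H) (pmf_of_set (pairings H))) {z. t < real z}
    \<le> indicator {D. real (\<Sum>i<n. D i) < 2 * m} D + ennreal (removed_edges_bound n s m D) * ennreal (1 / t)"
proof (cases "real (\<Sum>i<n. D i) < 2 * m")
  case True
  then have "emeasure (map_pmf (cm_Z n H) (pmf_of_set (pairings H))) {z. t < real z}
      \<le> indicator {D. real (\<Sum>i<n. D i) < 2 * m} D"
    by (simp add: measure_pmf.emeasure_eq_measure)
  then show ?thesis by (rule order_trans[OF _ add_increasing2[OF zero_le order_refl]])
next
  case False
  then have "measure_pmf.prob (map_pmf (cm_Z n H) (pmf_of_set (pairings H))) {z. t < real z}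
      \<le> removed_edges_bound n s m D / t"
    using assms unfolding H_def by (intro prob_cm_Z_gt_le) auto
  then have "emeasure (map_pmf (cm_Z n H) (pmf_of_set (pairings H))) {z. t < real z}
      \<le> ennreal (removed_edges_bound n s m D * (1 / t))"
    by (simp add: measure_pmf.emeasure_eq_measure ennreal_leI)
  also have "\<dots> = ennreal (removed_edges_bound n s m D) * ennreal (1 / t)"
    using assms(5) removed_edges_bound_nonneg by (intro ennreal_mult) auto
  finally show ?thesis by (simp add: add_increasing)
qed

lemma prob_Z_distr_gt_le:
  fixes p :: "nat pmf" and s m t \<mu> :: real
  assumes "1 \<le> s" "s \<le> 2" "6 \<le> m" "0 < t"
    and \<mu>: "(\<integral>\<^sup>+v. ennreal ((real v + 1) powr s) \<partial>p) = ennreal \<mu>" "0 \<le> \<mu>"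
  shows "measure_pmf.prob (Z_distr p n) {z. t < real z} \<le>
    measure_pmf.prob (Pi_pmf {..<n} 0 (\<lambda>_. p)) {D. real (\<Sum>i<n. D i) < 2 * m} +
    (real n * \<mu> * m powr (1 - s) + real n * real n * (2 * \<mu> * \<mu> * m powr (- s))) / t"
proof -
  let ?Pi = "Pi_pmf {..<n} 0 (\<lambda>_. p)"
  define Bad where "Bad = {D. real (\<Sum>i<n. D i) < 2 * m}"
  define W where "W = real n * \<mu> * m powr (1 - s) + real n * real n * (2 * \<mu> * \<mu> * m powr (- s))"
  have W: "0 \<le> W" using assms by (simp add: W_def)
  have "emeasure (Z_distr p n) {z. t < real z} = (\<integral>\<^sup>+D. emeasure (map_pmf (cm_Z n (half_edges n (cm_degrees n D)))
      (pmf_of_set (pairings (half_edges n (cm_degrees n D))))) {z. t < real z} \<partial>?Pi)"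
    unfolding Z_distr_def by (simp add: Let_def)
  also have "\<dots> \<le> (\<integral>\<^sup>+D. indicator Bad D + ennreal (removed_edges_bound n s m D) * ennreal (1 / t) \<partial>?Pi)"
    unfolding Bad_def using assms by (intro nn_integral_mono emeasure_cm_Z_gt_le) auto
  also have "\<dots> = emeasure ?Pi Bad + (\<integral>\<^sup>+D. ennreal (removed_edges_bound n s m D) \<partial>?Pi) * ennreal (1 / t)"
    by (simp add: nn_integral_add nn_integral_multc)
  also have "\<dots> \<le> ennreal (measure_pmf.prob ?Pi Bad) + ennreal W * ennreal (1 / t)"
    using nn_integral_removed_edges_bound_le[OF \<mu>] unfolding W_def
    by (intro add_mono mult_right_mono) (simp_all add: measure_pmf.emeasure_eq_measure)
  also have "\<dots> = ennreal (measure_pmf.prob ?Pi Bad + W / t)"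
    using W assms(4) by (simp add: ennreal_mult[symmetric] ennreal_plus[symmetric] divide_nonneg_pos
      del: ennreal_plus)
  finally have "ennreal (measure_pmf.prob (Z_distr p n) {z. t < real z}) \<le> ennreal (measure_pmf.prob ?Pi Bad + W / t)"
    by (simp add: measure_pmf.emeasure_eq_measure)
  then have "measure_pmf.prob (Z_distr p n) {z. t < real z} \<le> measure_pmf.prob ?Pi Bad + W / t"
    using W assms(4) by (subst (asm) ennreal_le_iff) auto
  then show ?thesis unfolding Bad_def W_def .
qed

lemma powr_mean_bound_scaling:
  fixes x \<mu> c s :: real
  assumes "0 < x"
  shows "x * \<mu> * (c * x) powr (1 - s) + x * x * (2 * \<mu> * \<mu> * (c * x) powr (- s)) =
    (\<mu> * c powr (1 - s) + 2 * \<mu> * \<mu> * c powr (- s)) * x powr (2 - s)"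
proof -
  have x1: "x * x powr (1 - s) = x powr (2 - s)"
    using assms powr_mult_base[of x "1 - s"] by simp
  then have x2: "x * x * x powr (- s) = x powr (2 - s)"
    using assms powr_mult_base[of x "- s"] by (simp add: mult.assoc)
  have "x * \<mu> * (c * x) powr (1 - s) = \<mu> * c powr (1 - s) * x powr (2 - s)"
    unfolding powr_mult x1[symmetric] by (simp add: mult_ac)
  moreover have "x * x * (2 * \<mu> * \<mu> * (c * x) powr (- s)) = 2 * \<mu> * \<mu> * c powr (- s) * x powr (2 - s)"
    unfolding powr_mult x2[symmetric] by (simp add: mult_ac)
  ultimately show ?thesis by (simp only: algebra_simps)
qed

lemma Z_distr_tail_bound:
  fixes p :: "nat pmf" and L :: "real \<Rightarrow> real" and \<gamma> s :: real
  assumes sv: "slowly_varying L"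
    and tail: "\<And>t. t > 0 \<Longrightarrow> measure_pmf.prob p {d. real d > t} = L t * t powr (- \<gamma>)"
    and s: "1 \<le> s" "s < \<gamma>" "s \<le> 2"
  obtains c K :: real where "0 < c"
    "\<And>n t. 12 \<le> c * real n \<Longrightarrow> 0 < t \<Longrightarrow>
      measure_pmf.prob (Z_distr p n) {z. t < real z} \<le> exp (- c * real n) + K * real n powr (2 - s) / t"
proof -
  have "(\<integral>\<^sup>+v. ennreal ((real v + 1) powr s) \<partial>p) < \<infinity>"
    using s by (intro nn_integral_powr_less_top[OF sv tail]) auto
  then obtain \<mu> where \<mu>: "(\<integral>\<^sup>+v. ennreal ((real v + 1) powr s) \<partial>p) = ennreal \<mu>" "0 \<le> \<mu>"
    by (auto simp: less_top_ennreal)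
  define q where "q = measure_pmf.prob p {d. d \<noteq> 0}"
  have "{d::nat. d \<noteq> 0} = {d. real d > 1/2}" by auto
  then have "q = L (1/2) * (1/2) powr (- \<gamma>)"
    unfolding q_def using tail[of "1/2"] by simp
  then have "0 < q" using sv by (simp add: slowly_varying_def)
  define c where "c = q * (1 - exp (-1)) / 2"
  show thesis
  proof (rule that[where K = "\<mu> * (c / 2) powr (1 - s) + 2 * \<mu> * \<mu> * (c / 2) powr (- s)"])
    show "0 < c" using \<open>0 < q\<close> by (simp add: c_def)
    fix n :: nat and t :: real
    assume n: "12 \<le> c * real n" and t: "0 < t"
    have "0 < real n" using n \<open>0 < c\<close> by (cases n) auto
    have "measure_pmf.prob (Z_distr p n) {z. t < real z} \<le>
        measure_pmf.prob (Pi_pmf {..<n} 0 (\<lambda>_. p)) {D. real (\<Sum>i<n. D i) < 2 * (c / 2 * real n)} +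
        (real n * \<mu> * (c / 2 * real n) powr (1 - s) +
          real n * real n * (2 * \<mu> * \<mu> * (c / 2 * real n) powr (- s))) / t"
      using n s t \<mu> by (intro prob_Z_distr_gt_le) auto
    also have "measure_pmf.prob (Pi_pmf {..<n} 0 (\<lambda>_. p)) {D. real (\<Sum>i<n. D i) < 2 * (c / 2 * real n)}
        \<le> exp (- c * real n)"
    proof -
      have "2 * (c / 2 * real n) = q * (1 - exp (-1)) / 2 * real n" by (simp add: c_def)
      then show ?thesis unfolding c_def by (simp only:) (rule prob_sum_less_le_exp[OF q_def[symmetric]])
    qed
    finally show "measure_pmf.prob (Z_distr p n) {z. t < real z}
        \<le> exp (- c * real n) + (\<mu> * (c / 2) powr (1 - s) + 2 * \<mu> * \<mu> * (c / 2) powr (- s)) * real n powr (2 - s) / t"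
      unfolding powr_mean_bound_scaling[OF \<open>0 < real n\<close>] by simp
  qed
qed

lemma Z_distr_scaled_tendsto_zero:
  fixes p :: "nat pmf" and L :: "real \<Rightarrow> real" and \<gamma> s r \<epsilon> :: real
  assumes "slowly_varying L"
    and "\<And>t. t > 0 \<Longrightarrow> measure_pmf.prob p {d. real d > t} = L t * t powr (- \<gamma>)"
    and "1 \<le> s" "s < \<gamma>" "s \<le> 2" "2 - s < r" "0 < \<epsilon>"
  shows "((\<lambda>n. measure_pmf.prob (Z_distr p n) {z. \<bar>real z / real n powr r\<bar> > \<epsilon>}) \<longlongrightarrow> 0) sequentially"
proof -
  obtain c K where c: "0 < c" and tail_bound: "\<And>n t. 12 \<le> c * real n \<Longrightarrow> 0 < t \<Longrightarrow>
      measure_pmf.prob (Z_distr p n) {z. t < real z} \<le> exp (- c * real n) + K * real n powr (2 - s) / t"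
    using Z_distr_tail_bound[OF assms(1-5)] by blast
  define b where "b = (\<lambda>n::nat. exp (- c) ^ n + K / \<epsilon> * real n powr (2 - s - r))"
  have "measure_pmf.prob (Z_distr p n) {z. \<bar>real z / real n powr r\<bar> > \<epsilon>} \<le> b n"
    if "n \<ge> nat \<lceil>12 / c\<rceil>" for n
  proof -
    have n: "12 \<le> c * real n" using that c by (simp add: field_simps)
    then have "0 < real n" using c by (cases n) auto
    then have "{z. \<bar>real z / real n powr r\<bar> > \<epsilon>} = {z. \<epsilon> * real n powr r < real z}"
      by (auto simp: pos_less_divide_eq mult.commute)
    moreover have "exp (- c) ^ n = exp (- c * real n)"
      by (simp add: exp_of_nat_mult[symmetric] mult.commute)
    moreover have "K * real n powr (2 - s) / (\<epsilon> * real n powr r) = K / \<epsilon> * real n powr (2 - s - r)"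
      by (simp add: powr_diff)
    ultimately show ?thesis
      using tail_bound[of n "\<epsilon> * real n powr r"] n \<open>0 < real n\<close> assms(7) by (simp add: b_def)
  qed
  then have ev: "eventually (\<lambda>n. measure_pmf.prob (Z_distr p n) {z. \<bar>real z / real n powr r\<bar> > \<epsilon>} \<le> b n) sequentially"
    unfolding eventually_sequentially by blast
  have "b \<longlonglongrightarrow> 0 + K / \<epsilon> * 0"
    unfolding b_def using c assms by (intro tendsto_add LIMSEQ_power_zero tendsto_mult tendsto_const
      tendsto_neg_powr filterlim_real_sequentially) auto
  then have "b \<longlonglongrightarrow> 0" by simp
  then show ?thesis
    using tendsto_sandwich[OF _ ev tendsto_const] by simp
qed

theorem theorem2p1:
  fixes p :: "nat pmf" and L :: "real \<Rightarrow> real" and \<gamma> :: real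
  assumes "slowly_varying L"
    and "\<And>t. t > 0 \<Longrightarrow> measure_pmf.prob p {d. real d > t} = L t * t powr (- \<gamma>)"
    and "1 < \<gamma>" and "\<gamma> < 2"
  shows "\<forall>\<delta>>0. \<forall>\<epsilon>>0.
    ((\<lambda>n. measure_pmf.prob (Z_distr p n)
        {z. \<bar>real z / real n powr (2 - \<gamma> + \<delta>)\<bar> > \<epsilon>}) \<longlongrightarrow> 0) sequentially"
proof (intro allI impI)
  fix \<delta> \<epsilon> :: real
  assume "\<delta> > 0" and "\<epsilon> > 0"
  define s where "s = (max 1 (\<gamma> - \<delta>) + \<gamma>) / 2"
  have s: "1 \<le> s" "s < \<gamma>" "s \<le> 2" "2 - s < 2 - \<gamma> + \<delta>"
    using assms(3,4) \<open>\<delta> > 0\<close> by (auto simp: s_def max_def field_simps)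
  show "((\<lambda>n. measure_pmf.prob (Z_distr p n)
      {z. \<bar>real z / real n powr (2 - \<gamma> + \<delta>)\<bar> > \<epsilon>}) \<longlongrightarrow> 0) sequentially"
    using Z_distr_scaled_tendsto_zero[OF assms(1,2) s \<open>\<epsilon> > 0\<close>] .
qed

end
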